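(* Let $\succcurlyeq$ be a preference relation on the set $\mathcal{B}$ of bets over a propositional language $\mathcal{L}$ satisfying Non-Triviality, Objective Expected Utility and Implication, and let $\mathcal{T}\subseteq\mathcal{L}$ be a theory. Then there exists a unique sub-theory $\mathcal{S}\subseteq\mathcal{T}$ such that $\succcurlyeq$ satisfies $\mathcal{S}$-Implication and, for any $\mathcal{S}'$ with $\mathcal{S}\subsetneq\mathcal{S}'\subseteq\mathcal{T}$, $\succcurlyeq$ does not satisfy $\mathcal{S}'$-Implication.
   Context: Let $\mathbb{P}$ be a set of propositional variables containing distinguished $\mathbf{T}$, $\mathbf{F}$, and $\mathcal{L}$ the language generated by $\neg,\land,\lor$; $\phi\implies\psi$ means $\psi$ is deducible from $\phi$ in classical propositional logic. A theory is a set $\mathcal{T}\subseteq\mathcal{L}$ closed under logical implication (anything deducible from elements of $\mathcal{T}$ lies in $\mathcal{T}$) with $\mathbf{F}\notin\mathcal{T}$. For a set of statements $\mathcal{S}$, write $\phi\overset{\mathcal{S}}{\implies}\psi$ if $\psi$ can be deduced from $\phi$ together with the elements of $\mathcal{S}$ in propositional logic. A bet is a finitely supported $b:\mathcal{L}\to[0,1]$ summing to $1$; $b_\phi$ is the point-mass bet on $\phi$; the set $\mathcal{B}$ of bets is a mixture space under pointwise mixtures and $\succcurlyeq$ is a relation on it. Non-Triviality: $b_{\mathbf{T}}\succcurlyeq b_\phi\succcurlyeq b_{\mathbf{F}}$ for all $\phi$ and $b_{\mathbf{T}}\succ b_{\mathbf{F}}$. Objective Expected Utility: $\succcurlyeq$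 is complete, transitive, Archimedean and satisfies Independence. Implication: $\phi\implies\psi$ implies $b_\psi\succcurlyeq b_\phi$. $\mathcal{S}$-Implication: $\phi\overset{\mathcal{S}}{\implies}\psi$ implies $b_\psi\succcurlyeq b_\phi$. *)

theory Defs
  imports Complex_Main
begin

datatype 'a form = Var 'a | Neg "'a form" | Conj "'a form" "'a form" | Disj "'a form" "'a form"

primrec eval :: "('a \<Rightarrow> bool) \<Rightarrow> 'a form \<Rightarrow> bool" where
  "eval v (Var p) = v p"
| "eval v (Neg f) = (\<not> eval v f)"
| "eval v (Conj f g) = (eval v f \<and> eval v g)"
| "eval v (Disj f g) = (eval v f \<or> eval v g)"

text \<open>Admissible valuations: the distinguished variables Tv, Fv denote truth and falsity.\<close>
definition admissible :: "'a \<Rightarrow> 'a \<Rightarrow> ('a \<Rightarrow> bool) \<Rightarrow> bool" where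
  "admissible Tv Fv v \<longleftrightarrow> v Tv \<and> \<not> v Fv"

text \<open>psi is deducible from the set of premises S (finitely many premises; classical logic,
  via soundness/completeness rendered semantically).\<close>
definition deducible :: "'a \<Rightarrow> 'a \<Rightarrow> 'a form set \<Rightarrow> 'a form \<Rightarrow> bool" where
  "deducible Tv Fv S \<psi> \<longleftrightarrow>
     (\<exists>G. G \<subseteq> S \<and> finite G \<and>
        (\<forall>v. admissible Tv Fv v \<longrightarrow> (\<forall>\<chi>\<in>G. eval v \<chi>) \<longrightarrow> eval v \<psi>))"

definition implies :: "'a \<Rightarrow> 'a \<Rightarrow> 'a form \<Rightarrow> 'a form \<Rightarrow> bool" where
  "implies Tv Fv \<phi> \<psi> \<longleftrightarrow> deducible Tv Fv {\<phi>} \<psi>"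

definition S_implies :: "'a \<Rightarrow> 'a \<Rightarrow> 'a form set \<Rightarrow> 'a form \<Rightarrow> 'a form \<Rightarrow> bool" where
  "S_implies Tv Fv S \<phi> \<psi> \<longleftrightarrow> deducible Tv Fv (insert \<phi> S) \<psi>"

definition is_theory :: "'a \<Rightarrow> 'a \<Rightarrow> 'a form set \<Rightarrow> bool" where
  "is_theory Tv Fv Th \<longleftrightarrow> (\<forall>\<psi>. deducible Tv Fv Th \<psi> \<longrightarrow> \<psi> \<in> Th) \<and> Var Fv \<notin> Th"

type_synonym 'a bet = "'a form \<Rightarrow> real"

definition is_bet :: "'a bet \<Rightarrow> bool" where
  "is_bet b \<longleftrightarrow> finite {\<phi>. b \<phi> \<noteq> 0} \<and> (\<forall>\<phi>. 0 \<le> b \<phi> \<and> b \<phi> \<le> 1)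
                 \<and> sum b {\<phi>. b \<phi> \<noteq> 0} = 1"

definition bets :: "'a bet set" where "bets = {b. is_bet b}"

definition mix :: "real \<Rightarrow> 'a bet \<Rightarrow> 'a bet \<Rightarrow> 'a bet" where
  "mix \<alpha> p q = (\<lambda>\<phi>. \<alpha> * p \<phi> + (1 - \<alpha>) * q \<phi>)"

definition point :: "'a form \<Rightarrow> 'a bet" where
  "point \<phi> = (\<lambda>\<psi>. if \<psi> = \<phi> then 1 else 0)"

definition strict :: "('a bet \<Rightarrow> 'a bet \<Rightarrow> bool) \<Rightarrow> 'a bet \<Rightarrow> 'a bet \<Rightarrow> bool" where
  "strict R p q \<longleftrightarrow> R p q \<and> \<not> R q p"

definition non_triviality :: "'a \<Rightarrow> 'a \<Rightarrow> ('a bet \<Rightarrow> 'a bet \<Rightarrow> bool) \<Rightarrow> bool" where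
  "non_triviality Tv Fv R \<longleftrightarrow>
     (\<forall>\<phi>. R (point (Var Tv)) (point \<phi>) \<and> R (point \<phi>) (point (Var Fv)))
     \<and> strict R (point (Var Tv)) (point (Var Fv))"

definition objective_EU :: "('a bet \<Rightarrow> 'a bet \<Rightarrow> bool) \<Rightarrow> bool" where
  "objective_EU R \<longleftrightarrow>
     (\<forall>p\<in>bets. \<forall>q\<in>bets. R p q \<or> R q p)
   \<and> (\<forall>p\<in>bets. \<forall>q\<in>bets. \<forall>r\<in>bets. R p q \<longrightarrow> R q r \<longrightarrow> R p r)
   \<and> (\<forall>p\<in>bets. \<forall>q\<in>bets. \<forall>r\<in>bets. strict R p q \<longrightarrow> strict R q r \<longrightarrow>
        (\<exists>\<alpha> \<beta>. 0 < \<alpha> \<and> \<alpha> < 1 \<and> 0 < \<beta> \<and> \<beta> < 1 \<and>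
           strict R (mix \<alpha> p r) q \<and> strict R q (mix \<beta> p r)))
   \<and> (\<forall>p\<in>bets. \<forall>q\<in>bets. \<forall>r\<in>bets. \<forall>\<alpha>. 0 < \<alpha> \<and> \<alpha> < 1 \<longrightarrow>
        (R p q \<longleftrightarrow> R (mix \<alpha> p r) (mix \<alpha> q r)))"

definition implication_ax :: "'a \<Rightarrow> 'a \<Rightarrow> ('a bet \<Rightarrow> 'a bet \<Rightarrow> bool) \<Rightarrow> bool" where
  "implication_ax Tv Fv R \<longleftrightarrow> (\<forall>\<phi> \<psi>. implies Tv Fv \<phi> \<psi> \<longrightarrow> R (point \<psi>) (point \<phi>))"

definition S_implication_ax :: "'a \<Rightarrow> 'a \<Rightarrow> 'a form set \<Rightarrow> ('a bet \<Rightarrow> 'a bet \<Rightarrow> bool) \<Rightarrow> bool" where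
  "S_implication_ax Tv Fv S R \<longleftrightarrow> (\<forall>\<phi> \<psi>. S_implies Tv Fv S \<phi> \<psi> \<longrightarrow> R (point \<psi>) (point \<phi>))"

end

theory Submission
  imports Defs
begin

text \<open>Only transitivity of the preference on point bets and the Implication axiom matter.
  Under them, S-Implication holds exactly when {s}-Implication holds for every s in S: a
  deduction from S uses finitely many premises s, and each premise can be absorbed into the
  antecedent, the step from \<phi> to \<phi> \<and> s being a {s}-Implication. Hence the premises s of
  the theory with {s}-Implication form the greatest subset of the theory satisfying
  S-Implication; it is deductively closed, and a greatest element is the unique maximal one.\<close>

lemma deducible_premise: "\<chi> \<in> S \<Longrightarrow> deducible Tv Fv S \<chi>"
  unfolding deducible_def by (intro exI[of _ "{\<chi>}"]) auto

lemma deducible_mono: "S \<subseteq> S' \<Longrightarrow> deducible Tv Fv S \<psi> \<Longrightarrow> deducible Tv Fv S' \<psi>"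
  unfolding deducible_def by blast

lemma deducible_trans:
  assumes from_S: "\<And>\<chi>. \<chi> \<in> S' \<Longrightarrow> deducible Tv Fv S \<chi>"
    and "deducible Tv Fv S' \<psi>"
  shows "deducible Tv Fv S \<psi>"
proof -
  obtain G' where G': "G' \<subseteq> S'" "finite G'"
      "\<forall>v. admissible Tv Fv v \<longrightarrow> (\<forall>\<chi>\<in>G'. eval v \<chi>) \<longrightarrow> eval v \<psi>"
    using assms(2) unfolding deducible_def by blast
  have "\<forall>\<chi>\<in>G'. \<exists>G. G \<subseteq> S \<and> finite G \<and>
          (\<forall>v. admissible Tv Fv v \<longrightarrow> (\<forall>\<xi>\<in>G. eval v \<xi>) \<longrightarrow> eval v \<chi>)"
    using from_S G'(1) unfolding deducible_def by blast
  from bchoice[OF this] obtain G where G: "\<forall>\<chi>\<in>G'. G \<chi> \<subseteq> S \<and> finite (G \<chi>) \<and>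
          (\<forall>v. admissible Tv Fv v \<longrightarrow> (\<forall>\<xi>\<in>G \<chi>. eval v \<xi>) \<longrightarrow> eval v \<chi>)"
    by blast
  have "\<Union>(G ` G') \<subseteq> S" "finite (\<Union>(G ` G'))" using G G'(2) by auto
  moreover have "\<forall>v. admissible Tv Fv v \<longrightarrow> (\<forall>\<xi>\<in>\<Union>(G ` G'). eval v \<xi>) \<longrightarrow> eval v \<psi>"
    using G G'(3) by fast
  ultimately show ?thesis unfolding deducible_def by blast
qed

lemma S_implies_finite_subset:
  assumes "S_implies Tv Fv S \<phi> \<psi>"
  obtains G where "G \<subseteq> S" "finite G" "S_implies Tv Fv G \<phi> \<psi>"
proof -
  obtain H where H: "H \<subseteq> insert \<phi> S" "finite H"
      "\<forall>v. admissible Tv Fv v \<longrightarrow> (\<forall>\<chi>\<in>H. eval v \<chi>) \<longrightarrow> eval v \<psi>"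
    using assms unfolding S_implies_def deducible_def by blast
  have "S_implies Tv Fv (H - {\<phi>}) \<phi> \<psi>"
    unfolding S_implies_def deducible_def by (rule exI[of _ H]) (use H in blast)
  with H show thesis using that[of "H - {\<phi>}"] by blast
qed

lemma S_implies_insert_Conj:
  "S_implies Tv Fv (insert s G) \<phi> \<psi> \<Longrightarrow> S_implies Tv Fv G (Conj \<phi> s) \<psi>"
  unfolding S_implies_def
proof (erule deducible_trans[rotated])
  fix \<chi> assume "\<chi> \<in> insert \<phi> (insert s G)"
  then consider "\<chi> = \<phi> \<or> \<chi> = s" | "\<chi> \<in> G" by blast
  then show "deducible Tv Fv (insert (Conj \<phi> s) G) \<chi>"
  proof cases
    case 1
    then show ?thesis
      unfolding deducible_def by (intro exI[of _ "{Conj \<phi> s}"]) auto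
  qed (simp add: deducible_premise)
qed

lemma S_implies_Conj: "S_implies Tv Fv {s} \<phi> (Conj \<phi> s)"
  unfolding S_implies_def deducible_def by (intro exI[of _ "{\<phi>, s}"]) auto

lemma implication_ax_iff_S_implication_ax_empty:
  "implication_ax Tv Fv R \<longleftrightarrow> S_implication_ax Tv Fv {} R"
  by (simp add: implication_ax_def S_implication_ax_def implies_def S_implies_def)

lemma S_implication_ax_if_deducible:
  assumes "\<And>\<chi>. \<chi> \<in> S' \<Longrightarrow> deducible Tv Fv S \<chi>"
    and "S_implication_ax Tv Fv S R"
  shows "S_implication_ax Tv Fv S' R"
  unfolding S_implication_ax_def
proof (intro allI impI)
  fix \<phi> \<psi> assume "S_implies Tv Fv S' \<phi> \<psi>"
  then have "S_implies Tv Fv S \<phi> \<psi>"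
    unfolding S_implies_def
    by (rule deducible_trans[rotated])
      (auto intro: deducible_premise deducible_mono[rotated] dest: assms(1))
  then show "R (point \<psi>) (point \<phi>)"
    using assms(2) unfolding S_implication_ax_def by blast
qed

lemma S_implication_ax_finite:
  assumes trans: "transp_on (range point) R"
    and "implication_ax Tv Fv R"
    and "finite G"
    and "\<And>s. s \<in> G \<Longrightarrow> S_implication_ax Tv Fv {s} R"
  shows "S_implication_ax Tv Fv G R"
  using assms(3,4)
proof (induction G rule: finite_induct)
  case empty
  then show ?case using assms(2) by (simp add: implication_ax_iff_S_implication_ax_empty)
next
  case (insert s G)
  have G_implication: "S_implication_ax Tv Fv G R" by (rule insert.IH) (simp add: insert.prems)
  have s_implication: "S_implication_ax Tv Fv {s} R" by (simp add: insert.prems)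
  show ?case
    unfolding S_implication_ax_def
  proof (intro allI impI)
    fix \<phi> \<psi> assume "S_implies Tv Fv (insert s G) \<phi> \<psi>"
    then have "S_implies Tv Fv G (Conj \<phi> s) \<psi>" by (rule S_implies_insert_Conj)
    then have "R (point \<psi>) (point (Conj \<phi> s))"
      using G_implication by (simp add: S_implication_ax_def)
    moreover have "R (point (Conj \<phi> s)) (point \<phi>)"
      using s_implication S_implies_Conj[of Tv Fv s \<phi>]
      unfolding S_implication_ax_def by blast
    ultimately show "R (point \<psi>) (point \<phi>)"
      by (rule transp_onD[OF trans rangeI rangeI rangeI])
  qed
qed

lemma S_implication_ax_iff_singletons:
  assumes "transp_on (range point) R"
    and "implication_ax Tv Fv R"
  shows "S_implication_ax Tv Fv S R \<longleftrightarrow> (\<forall>s\<in>S. S_implication_ax Tv Fv {s} R)"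
proof (intro iffI ballI)
  fix s assume S_implication: "S_implication_ax Tv Fv S R" and "s \<in> S"
  show "S_implication_ax Tv Fv {s} R"
    by (rule S_implication_ax_if_deducible[OF _ S_implication])
      (simp add: deducible_premise \<open>s \<in> S\<close>)
next
  assume singletons: "\<forall>s\<in>S. S_implication_ax Tv Fv {s} R"
  show "S_implication_ax Tv Fv S R"
    unfolding S_implication_ax_def
  proof (intro allI impI)
    fix \<phi> \<psi> assume "S_implies Tv Fv S \<phi> \<psi>"
    then obtain G where G: "G \<subseteq> S" "finite G" "S_implies Tv Fv G \<phi> \<psi>"
      by (rule S_implies_finite_subset)
    have "S_implication_ax Tv Fv G R"
      using S_implication_ax_finite[OF assms G(2)] singletons G(1) by blast
    then show "R (point \<psi>) (point \<phi>)"
      using G(3) by (simp add: S_implication_ax_def)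
  qed
qed

definition respected_part :: "'a \<Rightarrow> 'a \<Rightarrow> ('a bet \<Rightarrow> 'a bet \<Rightarrow> bool) \<Rightarrow> 'a form set \<Rightarrow> 'a form set"
  where "respected_part Tv Fv R Th = {s \<in> Th. S_implication_ax Tv Fv {s} R}"

lemma respected_part_greatest:
  assumes "transp_on (range point) R"
    and "implication_ax Tv Fv R"
  shows "S_implication_ax Tv Fv (respected_part Tv Fv R Th) R"
    and "S \<subseteq> Th \<Longrightarrow> S_implication_ax Tv Fv S R \<Longrightarrow> S \<subseteq> respected_part Tv Fv R Th"
proof -
  show "S_implication_ax Tv Fv (respected_part Tv Fv R Th) R"
    using S_implication_ax_iff_singletons[OF assms] unfolding respected_part_def by blast
  show "S \<subseteq> respected_part Tv Fv R Th" if "S \<subseteq> Th" "S_implication_ax Tv Fv S R"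
    using that S_implication_ax_iff_singletons[OF assms] unfolding respected_part_def by blast
qed

lemma is_theory_respected_part:
  assumes "transp_on (range point) R"
    and "implication_ax Tv Fv R"
    and "is_theory Tv Fv Th"
  shows "is_theory Tv Fv (respected_part Tv Fv R Th)"
  unfolding is_theory_def
proof (intro conjI allI impI)
  fix \<psi> assume deduced: "deducible Tv Fv (respected_part Tv Fv R Th) \<psi>"
  then have "deducible Tv Fv Th \<psi>"
    by (rule deducible_mono[rotated]) (auto simp: respected_part_def)
  then have "\<psi> \<in> Th" using assms(3) by (simp add: is_theory_def)
  moreover have "S_implication_ax Tv Fv {\<psi>} R"
    using respected_part_greatest(1)[OF assms(1,2), of Th]
    by (rule S_implication_ax_if_deducible[rotated]) (simp add: deduced)
  ultimately show "\<psi> \<in> respected_part Tv Fv R Th" by (simp add: respected_part_def)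
next
  show "Var Fv \<notin> respected_part Tv Fv R Th"
    using assms(3) by (auto simp: is_theory_def respected_part_def)
qed

lemma objective_EU_transp_on_points:
  assumes "objective_EU R"
  shows "transp_on (range point) R"
proof (rule transp_on_subset)
  show "transp_on bets R"
    using assms unfolding objective_EU_def transp_on_def by blast
  have "{\<psi>. point \<phi> \<psi> \<noteq> 0} = {\<phi>}" for \<phi> :: "'a form"
    by (auto simp: point_def)
  then show "range point \<subseteq> bets"
    by (auto simp: bets_def is_bet_def point_def)
qed

theorem proposition5:
  fixes Tv Fv :: 'a and R :: "'a bet \<Rightarrow> 'a bet \<Rightarrow> bool" and Th :: "'a form set"
  assumes "Tv \<noteq> Fv"
    and "non_triviality Tv Fv R"
    and "objective_EU R"
    and "implication_ax Tv Fv R"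
    and "is_theory Tv Fv Th"
  shows "\<exists>!S. S \<subseteq> Th \<and> is_theory Tv Fv S \<and> S_implication_ax Tv Fv S R
              \<and> (\<forall>S'. S \<subset> S' \<and> S' \<subseteq> Th \<longrightarrow> \<not> S_implication_ax Tv Fv S' R)"
proof (rule ex1I)
  let ?M = "respected_part Tv Fv R Th"
  note trans = objective_EU_transp_on_points[OF assms(3)]
  note greatest = respected_part_greatest[OF trans assms(4)]
  have sub: "?M \<subseteq> Th" by (auto simp: respected_part_def)
  have maximal: "\<not> S_implication_ax Tv Fv S' R" if "?M \<subset> S'" "S' \<subseteq> Th" for S'
    using that greatest(2)[of S'] by blast
  show "?M \<subseteq> Th \<and> is_theory Tv Fv ?M \<and> S_implication_ax Tv Fv ?M R
      \<and> (\<forall>S'. ?M \<subset> S' \<and> S' \<subseteq> Th \<longrightarrow> \<not> S_implication_ax Tv Fv S' R)"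
    using sub is_theory_respected_part[OF trans assms(4,5)] greatest(1) maximal by blast
  fix S assume S: "S \<subseteq> Th \<and> is_theory Tv Fv S \<and> S_implication_ax Tv Fv S R
      \<and> (\<forall>S'. S \<subset> S' \<and> S' \<subseteq> Th \<longrightarrow> \<not> S_implication_ax Tv Fv S' R)"
  then have "S \<subseteq> ?M" by (intro greatest(2)) simp_all
  moreover have "\<not> S \<subset> ?M"
    using S sub greatest(1) by blast
  ultimately show "S = ?M" by (simp add: psubset_eq)
qed

end
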